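(* Let $\mathcal{A}$ be a separating union-closed family with base set $[n]$ and height $h=4$, and let $\mathcal{B}=\{B_1,B_2,B_3,B_4\}$ be a choice of $\mathcal{B}(\mathcal{A})$ with $|\mathcal{B}|=4$. Then: (i) if $n$ is even, then $\sum_{i=1}^4 |B_i| = 2n-4$ and $|B_i|=\frac{n-2}{2}$ for all $i \in \{1,2,3,4\}$; (ii) if $n$ is odd, then $2n-4 \leq \sum_{i=1}^4 |B_i| \leq 2n-2$ and $|B_i| \geq \frac{n-5}{2}$ for all $i \in \{1,2,3,4\}$; moreover, if there exists $i \in \{1,2,3,4\}$ with $|B_i|=\frac{n-5}{2}$, then $|B_j|=\frac{n-1}{2}$ for all $j \in \{1,2,3,4\} \setminus \{i\}$.
   Context: A family of sets $\mathcal{A}$ is union-closed if it is a finite family of distinct finite sets with at least one nonempty member set, and $X,Y\in\mathcal{A}$ implies $X\cup Y\in\mathcal{A}$ (the empty set may be a member). For a family $\mathcal{F}$, $b(\mathcal{F})=\bigcup_{F\in\mathcal{F}}F$; the base set $b(\mathcal{A})$ is denoted $[n]=\{1,\dots,n\}$. $\mathcal{A}$ is separating if for any two distinct $x,y\in[n]$ there is $A\in\mathcal{A}$ containing exactly one of $x,y$. A chain in $\mathcal{A}$ is a subfamily any two distinct members of which are comparable under proper inclusion; the height $h$ of $\mathcal{A}$ is the maximum size of a chain in $\mathcal{A}$. For real $x\ge 0$, $\mathcal{A}_{<x}=\{A\in\mathcal{A} : |A|<x\}$. For $\mathcal{S}\subseteq\mathcal{A}$ and $S\in\mathcal{S}$,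 $\mathrm{irr}_{\mathcal{S}}(S)=\{s\in S : s\notin b(\mathcal{S}\setminus\{S\})\}$, and $\mathcal{S}$ is irredundant if $\mathrm{irr}_{\mathcal{S}}(S)\neq\emptyset$ for every $S\in\mathcal{S}$. With $B=b(\mathcal{A}_{<n/2})$, $\mathcal{B}(\mathcal{A})$ denotes any irredundant subfamily of $\mathcal{A}_{<n/2}$ of minimum size such that $b(\mathcal{B}(\mathcal{A}))=B$. *)

theory Defs
  imports Main "HOL.Real"
begin

definition union_closed :: "'a set set \<Rightarrow> bool" where
  "union_closed A \<longleftrightarrow> finite A \<and> (\<forall>X\<in>A. finite X) \<and> (\<exists>X\<in>A. X \<noteq> {})
     \<and> (\<forall>X\<in>A. \<forall>Y\<in>A. X \<union> Y \<in> A)"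

definition separating :: "'a set set \<Rightarrow> bool" where
  "separating A \<longleftrightarrow> (\<forall>x\<in>\<Union>A. \<forall>y\<in>\<Union>A. x \<noteq> y \<longrightarrow> (\<exists>S\<in>A. (x \<in> S) \<noteq> (y \<in> S)))"

definition is_chain :: "'a set set \<Rightarrow> bool" where
  "is_chain C \<longleftrightarrow> (\<forall>X\<in>C. \<forall>Y\<in>C. X \<noteq> Y \<longrightarrow> X \<subset> Y \<or> Y \<subset> X)"

definition height :: "'a set set \<Rightarrow> nat" where
  "height A = Max {card C | C. C \<subseteq> A \<and> is_chain C}"

definition smaller_than :: "'a set set \<Rightarrow> real \<Rightarrow> 'a set set" where
  "smaller_than A x = {S\<in>A. real (card S) < x}"

definition irr :: "'a set set \<Rightarrow> 'a set \<Rightarrow> 'a set" where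
  "irr S T = {s\<in>T. s \<notin> \<Union>(S - {T})}"

definition irredundant :: "'a set set \<Rightarrow> bool" where
  "irredundant S \<longleftrightarrow> (\<forall>T\<in>S. irr S T \<noteq> {})"

definition is_B :: "'a set set \<Rightarrow> nat \<Rightarrow> 'a set set \<Rightarrow> bool" where
  "is_B A n Bf \<longleftrightarrow>
     Bf \<subseteq> smaller_than A (real n / 2) \<and> irredundant Bf \<and>
     \<Union>Bf = \<Union>(smaller_than A (real n / 2)) \<and>
     (\<forall>C. C \<subseteq> smaller_than A (real n / 2) \<and> irredundant C \<and>
          \<Union>C = \<Union>(smaller_than A (real n / 2)) \<longrightarrow> card Bf \<le> card C)"

end

theory Submission
  imports Defs
begin

(* Let Bf = {B1, B2, B3, B4}.  If B1 had two irreducible elements x, y (elements of irr Bf B1),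
   a set S \<in> A separating them, say x \<in> S and y \<notin> S, would give the chain
     B2 \<subset> B2 \<union> B3 \<subset> B2 \<union> B3 \<union> B4 \<subset> B2 \<union> B3 \<union> B4 \<union> S \<subset> B2 \<union> B3 \<union> B4 \<union> S \<union> B1,
   whose inclusions are strict by irreducible elements of B3 and B4 and by x and y, contradicting
   height 4.  In the same way a point of [n] outside the union of Bf would extend the chain of
   unions of the Bi.  So the Bi cover [n] and every point lies in two of them, except at most
   four irreducible ones: 2n \<le> \<Sigma> |Bi| + 4.  Together with |Bi| < n/2 this pins down the sizes. *)

lemma height_ge_card_chain:
  assumes "finite A" "C \<subseteq> A" "is_chain C"
  shows "card C \<le> height A"
proof -
  have "{card C | C. C \<subseteq> A \<and> is_chain C} \<subseteq> card ` Pow A" by blast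
  then have "finite {card C | C. C \<subseteq> A \<and> is_chain C}"
    using assms(1) by (meson finite_Pow_iff finite_imageI finite_subset)
  then show ?thesis
    unfolding height_def using assms(2,3) by (auto intro: Max_ge)
qed

lemma chain_insert_above:
  assumes "is_chain C" "finite C" "\<forall>X\<in>C. X \<subseteq> Z" "Z \<subset> Y"
  shows "is_chain (insert Y C)" "card (insert Y C) = Suc (card C)" "\<forall>X\<in>insert Y C. X \<subseteq> Y"
proof -
  have above: "X \<subset> Y" if "X \<in> C" for X
    using assms(3,4) that by (meson subset_psubset_trans)
  show "is_chain (insert Y C)"
    using assms(1) above unfolding is_chain_def by blast
  show "card (insert Y C) = Suc (card C)"
    using assms(2) above by (subst card_insert_disjoint) auto
  show "\<forall>X\<in>insert Y C. X \<subseteq> Y"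
    using above by blast
qed

lemma Union_mem_if_closed_under_union:
  assumes closed: "\<And>X Y. X \<in> A \<Longrightarrow> Y \<in> A \<Longrightarrow> X \<union> Y \<in> A"
    and "finite F" "F \<noteq> {}" "F \<subseteq> A"
  shows "\<Union>F \<in> A"
  using assms(2-4) by (induction F rule: finite_ne_induct) (auto intro: closed)

lemma irredundant_subset:
  assumes "irredundant F" "G \<subseteq> F"
  shows "irredundant G"
  unfolding irredundant_def
proof
  fix T assume "T \<in> G"
  then have "irr F T \<noteq> {}"
    using assms unfolding irredundant_def by blast
  moreover have "irr F T \<subseteq> irr G T"
    using \<open>G \<subseteq> F\<close> unfolding irr_def by blast
  ultimately show "irr G T \<noteq> {}"
    by blast
qed

lemma irredundant_union_chain:
  assumes closed: "\<And>X Y. X \<in> A \<Longrightarrow> Y \<in> A \<Longrightarrow> X \<union> Y \<in> A"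
    and "finite F" "F \<subseteq> A" "irredundant F"
  shows "\<exists>C\<subseteq>A. is_chain C \<and> finite C \<and> card C = card F \<and> (\<forall>X\<in>C. X \<subseteq> \<Union>F)"
  using assms(2-4)
proof (induction F rule: finite_induct)
  case empty
  show ?case
    by (intro exI[of _ "{}"]) (simp add: is_chain_def)
next
  case (insert B F)
  have "irredundant F"
    using insert.prems(2) by (rule irredundant_subset) blast
  then obtain C where C: "C \<subseteq> A" "is_chain C" "finite C" "card C = card F" "\<forall>X\<in>C. X \<subseteq> \<Union>F"
    using insert.IH insert.prems(1) by blast
  let ?Y = "\<Union>(insert B F)"
  obtain z where "z \<in> irr (insert B F) B"
    using insert.prems(2) unfolding irredundant_def by blast
  then have "z \<in> B" "z \<notin> \<Union>F"
    unfolding irr_def using insert.hyps(2) by auto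
  then have "\<Union>F \<subset> ?Y"
    by blast
  note extended = chain_insert_above[OF C(2,3,5) this]
  have "?Y \<in> A"
    using insert.hyps(1) insert.prems(1) by (intro Union_mem_if_closed_under_union[OF closed]) auto
  then show ?case
    using C(1,3,4) extended insert.hyps by (intro exI[of _ "insert ?Y C"]) simp
qed

lemma card_lt_height_if_irr_separated:
  assumes closed: "\<And>X Y. X \<in> A \<Longrightarrow> Y \<in> A \<Longrightarrow> X \<union> Y \<in> A"
    and "finite A" "finite F" "F \<subseteq> A" "irredundant F" "B \<in> F"
    and x: "x \<in> irr F B" and y: "y \<in> irr F B"
    and S: "S \<in> A" "x \<in> S" "y \<notin> S"
  shows "card F < height A"
proof -
  let ?G = "F - {B}"
  have G: "finite ?G" "?G \<subseteq> A" "irredundant ?G"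
    using assms(3-5) irredundant_subset[of F ?G] by auto
  obtain C where C: "C \<subseteq> A" "is_chain C" "finite C" "card C = card ?G" "\<forall>X\<in>C. X \<subseteq> \<Union>?G"
    using irredundant_union_chain[OF closed G] by blast
  let ?Y1 = "\<Union>(insert S ?G)" and ?Y2 = "\<Union>(insert B (insert S ?G))"
  have "x \<notin> \<Union>?G" "y \<notin> \<Union>?G" "y \<in> B"
    using x y unfolding irr_def by auto
  have "\<Union>?G \<subset> ?Y1"
    using \<open>x \<notin> \<Union>?G\<close> S(2) by blast
  note extended1 = chain_insert_above[OF C(2,3,5) this]
  have "?Y1 \<subset> ?Y2"
    using \<open>y \<notin> \<Union>?G\<close> \<open>y \<in> B\<close> S(3) by blast
  note extended2 = chain_insert_above[OF extended1(1) finite.insertI[OF C(3)] extended1(3) this]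
  have "?Y1 \<in> A" "?Y2 \<in> A"
    using assms(3,4,6) S(1) by (intro Union_mem_if_closed_under_union[OF closed]; auto)+
  then have "card (insert ?Y2 (insert ?Y1 C)) \<le> height A"
    using height_ge_card_chain[OF \<open>finite A\<close> _ extended2(1)] C(1) by simp
  moreover have "card (insert ?Y2 (insert ?Y1 C)) = Suc (card F)"
    using extended2(2) extended1(2) C(4) card_Suc_Diff1[OF assms(3,6)] by simp
  ultimately show ?thesis
    by simp
qed

lemma card_irr_le_1_if_height_le_card:
  assumes closed: "\<And>X Y. X \<in> A \<Longrightarrow> Y \<in> A \<Longrightarrow> X \<union> Y \<in> A"
    and "finite A" "separating A" "finite F" "F \<subseteq> A" "irredundant F" "height A \<le> card F"
    and "B \<in> F"
  shows "card (irr F B) \<le> 1"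
proof -
  have "x = y" if "x \<in> irr F B" "y \<in> irr F B" for x y
  proof (rule ccontr)
    assume "x \<noteq> y"
    moreover have "x \<in> \<Union>A" "y \<in> \<Union>A"
      using that \<open>B \<in> F\<close> \<open>F \<subseteq> A\<close> unfolding irr_def by auto
    ultimately obtain S where "S \<in> A" "(x \<in> S) \<noteq> (y \<in> S)"
      using \<open>separating A\<close> unfolding separating_def by blast
    then have "card F < height A"
      using card_lt_height_if_irr_separated[OF closed assms(2,4-6,8)] that by metis
    then show False
      using \<open>height A \<le> card F\<close> by simp
  qed
  then show ?thesis
    by (metis card.infinite card_le_Suc0_iff_eq One_nat_def zero_le)
qed

lemma Union_eq_if_height_le_card:
  assumes closed: "\<And>X Y. X \<in> A \<Longrightarrow> Y \<in> A \<Longrightarrow> X \<union> Y \<in> A"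
    and "finite A" "finite F" "F \<subseteq> A" "irredundant F" "height A \<le> card F"
  shows "\<Union>F = \<Union>A"
proof (rule ccontr)
  assume "\<Union>F \<noteq> \<Union>A"
  then obtain S x where S: "S \<in> A" "x \<in> S" "x \<notin> \<Union>F"
    using \<open>F \<subseteq> A\<close> by blast
  obtain C where C: "C \<subseteq> A" "is_chain C" "finite C" "card C = card F" "\<forall>X\<in>C. X \<subseteq> \<Union>F"
    using irredundant_union_chain[OF closed assms(3-5)] by blast
  let ?Y = "\<Union>(insert S F)"
  have "\<Union>F \<subset> ?Y"
    using S(2,3) by blast
  note extended = chain_insert_above[OF C(2,3,5) this]
  have "?Y \<in> A"
    using assms(3,4) S(1) by (intro Union_mem_if_closed_under_union[OF closed]) auto
  then have "card (insert ?Y C) \<le> height A"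
    using height_ge_card_chain[OF \<open>finite A\<close> _ extended(1)] C(1) by simp
  then show False
    using extended(2) C(4) \<open>height A \<le> card F\<close> by simp
qed

lemma two_card_Union_le:
  assumes "finite F" "\<And>B. B \<in> F \<Longrightarrow> finite B" "\<And>B. B \<in> F \<Longrightarrow> card (irr F B) \<le> 1"
  shows "2 * card (\<Union>F) \<le> (\<Sum>B\<in>F. card B) + card F"
proof -
  let ?U = "\<Union>F" and ?I = "\<Union>B\<in>F. irr F B"
  let ?deg = "\<lambda>x. card {B\<in>F. x \<in> B}"
  have "finite ?U"
    using assms(1,2) by blast
  have I_sub: "?I \<subseteq> ?U"
    unfolding irr_def by blast
  have "card ?I \<le> (\<Sum>B\<in>F. card (irr F B))"
    using assms(1) by (rule card_UN_le)
  also have "\<dots> \<le> card F"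
    using sum_mono[of F "\<lambda>B. card (irr F B)" "\<lambda>_. 1"] assms(3) by simp
  finally have card_I: "card ?I \<le> card F" .
  have degree_sum: "(\<Sum>x\<in>?U. ?deg x) = (\<Sum>B\<in>F. card B)"
    using \<open>finite ?U\<close> assms(1) by (intro sum_multicount_gen) (auto intro!: arg_cong[where f = card])
  have "2 \<le> ?deg x + (if x \<in> ?I then 1 else 0)" if x: "x \<in> ?U" for x
  proof (cases "x \<in> ?I")
    case True
    then obtain B where "B \<in> F" "x \<in> B"
      unfolding irr_def by blast
    then have "{B\<in>F. x \<in> B} \<noteq> {}" by blast
    then show ?thesis
      using True assms(1) by (simp add: Suc_leI card_gt_0_iff)
  next
    case False
    obtain B where B: "B \<in> F" "x \<in> B"
      using x by blast
    then obtain B' where B': "B' \<in> F" "B' \<noteq> B" "x \<in> B'"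
      using False unfolding irr_def by blast
    have "card {B, B'} \<le> ?deg x"
      using B B' assms(1) by (intro card_mono) auto
    then show ?thesis
      using B' by simp
  qed
  then have "(\<Sum>x\<in>?U. 2) \<le> (\<Sum>x\<in>?U. ?deg x + (if x \<in> ?I then 1 else 0))"
    by (rule sum_mono)
  also have "\<dots> = (\<Sum>B\<in>F. card B) + card ?I"
    using \<open>finite ?U\<close>
    by (simp only: sum.distrib degree_sum sum.If_cases Collect_mem_eq Int_absorb1[OF I_sub]) simp
  finally show ?thesis
    using card_I by simp
qed

lemma is_BD:
  assumes "is_B A n Bf"
  shows "Bf \<subseteq> A" "irredundant Bf" "\<forall>B\<in>Bf. 2 * card B < n"
proof -
  have Bf_small: "Bf \<subseteq> smaller_than A (real n / 2)"
    using assms unfolding is_B_def by blast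
  then show "Bf \<subseteq> A"
    unfolding smaller_than_def by blast
  show "irredundant Bf"
    using assms unfolding is_B_def by blast
  show "\<forall>B\<in>Bf. 2 * card B < n"
  proof
    fix B assume "B \<in> Bf"
    then have "real (2 * card B) < real n"
      using Bf_small unfolding smaller_than_def by auto
    then show "2 * card B < n"
      by (simp only: of_nat_less_iff)
  qed
qed

lemma sum_deficit_le:
  fixes f :: "'a \<Rightarrow> real"
  assumes "finite S" "T \<subseteq> S" "\<forall>x\<in>S. f x \<le> b"
  shows "(\<Sum>x\<in>T. b - f x) \<le> real (card S) * b - sum f S"
proof -
  have "(\<Sum>x\<in>T. b - f x) \<le> (\<Sum>x\<in>S. b - f x)"
    using assms by (intro sum_mono2) auto
  also have "\<dots> = real (card S) * b - sum f S"
    by (simp add: sum_subtractf)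
  finally show ?thesis .
qed

lemma four_sizes_below_half_large_sum_even:
  fixes c :: "'a \<Rightarrow> nat"
  assumes "finite S" "card S = 4" "\<forall>B\<in>S. 2 * c B < n" "2 * n \<le> (\<Sum>B\<in>S. c B) + 4"
    and "even n"
  shows "real (\<Sum>B\<in>S. c B) = 2 * real n - 4 \<and> (\<forall>B\<in>S. real (c B) = (real n - 2) / 2)"
proof -
  have sum_ge: "2 * real n - 4 \<le> real (\<Sum>B\<in>S. c B)"
    using assms(4) by linarith
  have le: "\<forall>B\<in>S. real (c B) \<le> (real n - 2) / 2"
  proof
    fix B assume "B \<in> S"
    then have "2 * c B < n"
      using assms(3) by blast
    then have "2 * c B + 2 \<le> n"
      using \<open>even n\<close> by (auto elim!: evenE)
    then show "real (c B) \<le> (real n - 2) / 2"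
      using of_nat_mono[where 'a = real] by (fastforce simp: field_simps)
  qed
  have "real (\<Sum>B\<in>S. c B) \<le> 4 * ((real n - 2) / 2)"
    using sum_bounded_above[of S "\<lambda>B. real (c B)" "(real n - 2) / 2"] le \<open>card S = 4\<close> by simp
  then have sum_eq: "real (\<Sum>B\<in>S. c B) = 2 * real n - 4"
    using sum_ge by simp
  have "(real n - 2) / 2 - real (c B) \<le> 0" if "B \<in> S" for B
    using sum_deficit_le[OF \<open>finite S\<close> _ le, of "{B}"] that \<open>card S = 4\<close> sum_eq by simp argo
  then show ?thesis
    using sum_eq le by fastforce
qed

lemma four_sizes_below_half_large_sum_odd:
  fixes c :: "'a \<Rightarrow> nat"
  assumes "finite S" "card S = 4" "\<forall>B\<in>S. 2 * c B < n" "2 * n \<le> (\<Sum>B\<in>S. c B) + 4"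
  shows "real (\<Sum>B\<in>S. c B) \<le> 2 * real n - 2"
    and "\<forall>B\<in>S. real (c B) \<ge> (real n - 5) / 2"
    and "\<forall>B\<in>S. real (c B) = (real n - 5) / 2 \<longrightarrow>
           (\<forall>B'\<in>S - {B}. real (c B') = (real n - 1) / 2)"
proof -
  have le: "\<forall>B\<in>S. real (c B) \<le> (real n - 1) / 2"
  proof
    fix B assume "B \<in> S"
    then have "2 * c B + 1 \<le> n"
      using assms(3) by fastforce
    then show "real (c B) \<le> (real n - 1) / 2"
      using of_nat_mono[where 'a = real] by (fastforce simp: field_simps)
  qed
  show "real (\<Sum>B\<in>S. c B) \<le> 2 * real n - 2"
    using sum_bounded_above[of S "\<lambda>B. real (c B)" "(real n - 1) / 2"] le \<open>card S = 4\<close>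
    by simp
  have "2 * real n - 4 \<le> real (\<Sum>B\<in>S. c B)"
    using assms(4) by linarith
  then have slack: "(\<Sum>B\<in>T. (real n - 1) / 2 - real (c B)) \<le> 2" if "T \<subseteq> S" for T
    using sum_deficit_le[OF \<open>finite S\<close> that le] \<open>card S = 4\<close> by simp argo
  show "\<forall>B\<in>S. real (c B) \<ge> (real n - 5) / 2"
  proof
    fix B assume "B \<in> S"
    then have "(real n - 1) / 2 - real (c B) \<le> 2"
      using slack[of "{B}"] by simp
    then show "real (c B) \<ge> (real n - 5) / 2"
      by argo
  qed
  show "\<forall>B\<in>S. real (c B) = (real n - 5) / 2 \<longrightarrow>
          (\<forall>B'\<in>S - {B}. real (c B') = (real n - 1) / 2)"
  proof (intro ballI impI)
    fix B B' assume B: "B \<in> S" "real (c B) = (real n - 5) / 2" and B': "B' \<in> S - {B}"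
    then have "(real n - 1) / 2 - real (c B) + ((real n - 1) / 2 - real (c B')) \<le> 2"
      using slack[of "{B, B'}"] by auto
    moreover have "real (c B') \<le> (real n - 1) / 2"
      using le B' by blast
    ultimately show "real (c B') = (real n - 1) / 2"
      using B(2) by argo
  qed
qed

theorem propositionL:
  fixes A :: "nat set set" and n :: nat and Bf :: "nat set set"
  assumes "union_closed A"
    and "\<Union>A = {1..n}"
    and "separating A"
    and "height A = 4"
    and "is_B A n Bf"
    and "card Bf = 4"
  shows "(even n \<longrightarrow>
            real (\<Sum>B\<in>Bf. card B) = 2 * real n - 4 \<and>
            (\<forall>B\<in>Bf. real (card B) = (real n - 2) / 2))
       \<and> (odd n \<longrightarrow>
            2 * real n - 4 \<le> real (\<Sum>B\<in>Bf. card B) \<and>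
            real (\<Sum>B\<in>Bf. card B) \<le> 2 * real n - 2 \<and>
            (\<forall>B\<in>Bf. real (card B) \<ge> (real n - 5) / 2) \<and>
            (\<forall>B\<in>Bf. real (card B) = (real n - 5) / 2 \<longrightarrow>
                (\<forall>B'\<in>Bf - {B}. real (card B') = (real n - 1) / 2)))"
proof -
  have closed: "\<And>X Y. X \<in> A \<Longrightarrow> Y \<in> A \<Longrightarrow> X \<union> Y \<in> A"
    and "finite A" and members_finite: "\<And>X. X \<in> A \<Longrightarrow> finite X"
    using assms(1) unfolding union_closed_def by auto
  note Bf = is_BD[OF assms(5)]
  have "finite Bf"
    using assms(6) by (simp add: card_ge_0_finite)
  have height: "height A \<le> card Bf"
    using assms(4,6) by simp
  have "\<Union>Bf = {1..n}"
    using Union_eq_if_height_le_card[OF closed \<open>finite A\<close> \<open>finite Bf\<close> Bf(1,2) height] assms(2)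
    by simp
  moreover have "2 * card (\<Union>Bf) \<le> (\<Sum>B\<in>Bf. card B) + card Bf"
    using Bf(1) members_finite
      card_irr_le_1_if_height_le_card[OF closed \<open>finite A\<close> assms(3) \<open>finite Bf\<close> Bf(1,2) height]
    by (intro two_card_Union_le \<open>finite Bf\<close>) auto
  ultimately have cover: "2 * n \<le> (\<Sum>B\<in>Bf. card B) + 4"
    using assms(6) by simp
  then have "2 * real n - 4 \<le> real (\<Sum>B\<in>Bf. card B)"
    by linarith
  then show ?thesis
    using four_sizes_below_half_large_sum_even[OF \<open>finite Bf\<close> assms(6) Bf(3) cover]
      four_sizes_below_half_large_sum_odd[OF \<open>finite Bf\<close> assms(6) Bf(3) cover]
    by blast
qed

end
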